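(* Let $q$ be a symmetric unimodal probability density on $\mathbb{R}$ with $h_q:=-\int_{\mathbb{R}} q(x)\log q(x)\,dx$ finite, and let $0<d_{\min}\le d_{\max}$ be constants. Let $X$ be a real random variable with probability density $p$ satisfying $$\frac{q(x)}{d_{\max}}\le p(x)\le \frac{q(x)}{d_{\min}}\quad\text{for all }x\in\mathbb{R}.$$ Then the differential entropy $h(X)=-\int p\log p$ satisfies $$h(X)\ \ge\ \frac{h_q}{d_{\max}}+\log d_{\min}-\left(\frac{1}{d_{\min}}-\frac{1}{d_{\max}}\right)\big[q(0)\log q(0)\big]^+,$$ $$h(X)\ \le\ \frac{h_q}{d_{\min}}+\log d_{\max}+\left(\frac{1}{d_{\min}}-\frac{1}{d_{\max}}\right)\big[q(0)\log q(0)\big]^+.$$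
   Context: Natural logarithms are used, and $[x]^+=\max(0,x)$. A probability density is symmetric unimodal if it satisfies $q(x)=q(-x)$ for all $x$ and is non-increasing on $[0,\infty)$. In the intended application $p(x)=q(x)/d(x)$ on $[-A/2,A/2)$ with $d_{\min}=1-\frac{A}{M}q(0)$ and $d_{\max}=1+\frac{A}{M}q(0)$ (assumed positive), so both bounds tend to $h_q$ as $M\to\infty$. *)

theory Defs
  imports "HOL-Probability.Probability"
begin

definition prob_density :: "(real \<Rightarrow> real) \<Rightarrow> bool" where
  "prob_density f \<longleftrightarrow> f \<in> borel_measurable borel \<and> (\<forall>x. 0 \<le> f x)
     \<and> integrable lborel f \<and> (\<integral>x. f x \<partial>lborel) = 1"

definition sym_unimodal_density :: "(real \<Rightarrow> real) \<Rightarrow> bool" where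
  "sym_unimodal_density q \<longleftrightarrow> prob_density q \<and> (\<forall>x. q x = q (- x))
     \<and> (\<forall>x y. 0 \<le> x \<longrightarrow> x \<le> y \<longrightarrow> q y \<le> q x)"

definition diff_entropy :: "(real \<Rightarrow> real) \<Rightarrow> real" where
  "diff_entropy f = - (\<integral>x. f x * ln (f x) \<partial>lborel)"

definition pos_part :: "real \<Rightarrow> real" where
  "pos_part x = max 0 x"

end

theory Submission
  imports Defs
begin

text \<open>Write \<open>p ln p = p ln q - p ln (q/p)\<close>. The ratio \<open>q/p\<close> lies in \<open>[dmin, dmax]\<close>, so
  the second term is controlled by \<open>ln dmin\<close> and \<open>ln dmax\<close>. The first term lies between
  \<open>q ln q / dmax\<close> and \<open>q ln q / dmin\<close>, which differ by \<open>(1/dmin - 1/dmax) q ln q\<close>, so after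
  integration the error is at most \<open>(1/dmin - 1/dmax) \<integral> [q ln q]\<^sup>+\<close>. By unimodality
  \<open>q \<le> q 0\<close>, hence \<open>[q ln q]\<^sup>+ \<le> q [ln (q 0)]\<^sup>+\<close>, whose integral
  \<open>[ln (q 0)]\<^sup>+\<close> is at most \<open>[q 0 ln (q 0)]\<^sup>+\<close>.\<close>

lemma mult_ln_bounds_of_between:
  fixes p q dmin dmax :: real
  assumes "0 < dmin" "dmin \<le> dmax" "0 \<le> q" "q / dmax \<le> p" "p \<le> q / dmin"
  shows "p * ln q \<le> q * ln q / dmax + (1/dmin - 1/dmax) * max 0 (q * ln q)"
    and "q * ln q / dmin - (1/dmin - 1/dmax) * max 0 (q * ln q) \<le> p * ln q"
proof -
  have "0 \<le> 1/dmin - 1/dmax" using assms by (simp add: frac_le)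
  then have c: "0 \<le> (1/dmin - 1/dmax) * max 0 (q * ln q)" by simp
  show "p * ln q \<le> q * ln q / dmax + (1/dmin - 1/dmax) * max 0 (q * ln q)"
  proof (cases "ln q \<le> 0")
    case True
    then show ?thesis using mult_right_mono_neg[OF assms(4) True] c by simp
  next
    case False
    then have "max 0 (q * ln q) = q * ln q" using assms(3) by simp
    moreover have "p * ln q \<le> q / dmin * ln q"
      by (rule mult_right_mono[OF assms(5)]) (use False in linarith)
    ultimately show ?thesis by (simp add: algebra_simps)
  qed
  show "q * ln q / dmin - (1/dmin - 1/dmax) * max 0 (q * ln q) \<le> p * ln q"
  proof (cases "ln q \<le> 0")
    case True
    then show ?thesis using mult_right_mono_neg[OF assms(5) True] c by simp
  next
    case False
    then have "max 0 (q * ln q) = q * ln q" using assms(3) by simp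
    moreover have "q / dmax * ln q \<le> p * ln q"
      by (rule mult_right_mono[OF assms(4)]) (use False in linarith)
    ultimately show ?thesis by (simp add: algebra_simps)
  qed
qed

lemma mult_ln_bounds_of_ratio_bounds:
  fixes p q dmin dmax :: real
  assumes d: "0 < dmin" "dmin \<le> dmax" and q: "0 \<le> q"
    and lo: "q / dmax \<le> p" and up: "p \<le> q / dmin"
  shows "p * ln p \<le> q * ln q / dmax - p * ln dmin + (1/dmin - 1/dmax) * max 0 (q * ln q)"
    and "q * ln q / dmin - p * ln dmax - (1/dmin - 1/dmax) * max 0 (q * ln q) \<le> p * ln p"
proof -
  note between = mult_ln_bounds_of_between[OF d q lo up]
  have "p * ln dmin \<le> p * ln q - p * ln p \<and> p * ln q - p * ln p \<le> p * ln dmax"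
  proof (cases "q = 0")
    case True
    then show ?thesis using lo up by simp
  next
    case False
    then have "0 < q" using q by simp
    then have "0 < p" using lo d by (meson divide_pos_pos less_le_trans order_less_le_trans)
    moreover have "dmin \<le> q / p" "q / p \<le> dmax" using lo up d \<open>0 < p\<close>
      by (auto simp: field_simps)
    ultimately have "ln dmin \<le> ln (q / p)" "ln (q / p) \<le> ln dmax"
      using d by simp_all
    then have "p * ln dmin \<le> p * ln (q / p)" "p * ln (q / p) \<le> p * ln dmax"
      using \<open>0 < p\<close> by simp_all
    moreover have "p * ln (q / p) = p * ln q - p * ln p"
      using \<open>0 < q\<close> \<open>0 < p\<close> by (simp add: ln_div right_diff_distrib)
    ultimately show ?thesis by linarith
  qed
  then show "p * ln p \<le> q * ln q / dmax - p * ln dmin + (1/dmin - 1/dmax) * max 0 (q * ln q)"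
    and "q * ln q / dmin - p * ln dmax - (1/dmin - 1/dmax) * max 0 (q * ln q) \<le> p * ln p"
    using between by linarith+
qed

lemma pos_part_mult_ln_le:
  fixes q q0 :: real
  assumes "0 \<le> q" "q \<le> q0"
  shows "max 0 (q * ln q) \<le> q * max 0 (ln q0)"
proof (cases "q \<le> 1")
  case True
  then have "q * ln q \<le> 0" using assms by (cases "q = 0") (auto intro!: mult_nonneg_nonpos)
  then show ?thesis using assms by simp
next
  case False
  then have "q * ln q \<le> q * max 0 (ln q0)" using assms
    by (intro mult_left_mono) auto
  then show ?thesis using assms by simp
qed

lemma pos_part_ln_le_pos_part_mult_ln:
  fixes a :: real
  assumes "0 \<le> a"
  shows "max 0 (ln a) \<le> pos_part (a * ln a)"
proof (cases "a \<le> 1")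
  case True
  then show ?thesis using assms by (cases "a = 0") (auto simp: pos_part_def)
next
  case False
  then show ?thesis by (auto simp: pos_part_def mult_le_cancel_right1)
qed

lemma sym_unimodal_density_le_at_0:
  assumes "sym_unimodal_density q"
  shows "q x \<le> q 0"
proof -
  have "q \<bar>x\<bar> \<le> q 0" using assms by (simp add: sym_unimodal_density_def)
  moreover have "q \<bar>x\<bar> = q x" using assms by (simp add: sym_unimodal_density_def abs_if)
  ultimately show ?thesis by simp
qed

lemma integral_pos_part_mult_ln_le:
  assumes q: "sym_unimodal_density q"
    and int: "integrable lborel (\<lambda>x. q x * ln (q x))"
  shows "(\<integral>x. max 0 (q x * ln (q x)) \<partial>lborel) \<le> pos_part (q 0 * ln (q 0))"
proof -
  have q_density: "\<And>x. 0 \<le> q x" "integrable lborel q" "(\<integral>x. q x \<partial>lborel) = 1"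
    using q by (auto simp: sym_unimodal_density_def prob_density_def)
  have "(\<integral>x. max 0 (q x * ln (q x)) \<partial>lborel) \<le> (\<integral>x. q x * max 0 (ln (q 0)) \<partial>lborel)"
    using int q_density pos_part_mult_ln_le[OF _ sym_unimodal_density_le_at_0[OF q]]
    by (intro integral_mono) auto
  also have "\<dots> = max 0 (ln (q 0))" using q_density by simp
  also have "\<dots> \<le> pos_part (q 0 * ln (q 0))"
    using q_density by (intro pos_part_ln_le_pos_part_mult_ln) simp
  finally show ?thesis .
qed

lemma prob_density_of_distributed:
  assumes "prob_space M" and X: "distributed M lborel X (\<lambda>x. ennreal (p x))"
    and nonneg: "\<And>x. 0 \<le> p x"
  shows "prob_density p"
proof -
  have p_measurable: "p \<in> borel_measurable borel"
    using distributed_real_measurable[OF _ X] nonneg by simp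
  have "(\<integral>\<^sup>+x. ennreal (p x) \<partial>lborel) = (\<integral>\<^sup>+x. 1 \<partial>M)"
    using distributed_nn_integral[OF X, of "\<lambda>_. 1"] by simp
  also have "\<dots> = 1" using \<open>prob_space M\<close> by (simp add: prob_space.emeasure_space_1)
  finally have "(\<integral>\<^sup>+x. ennreal (p x) \<partial>lborel) = 1" .
  then show ?thesis using p_measurable nonneg
    by (auto simp: prob_density_def integrableI_nonneg integral_eq_nn_integral)
qed

lemma integrable_between:
  fixes f g h :: "'a \<Rightarrow> real"
  assumes "f \<in> borel_measurable M" "integrable M g" "integrable M h"
    and "\<And>x. g x \<le> f x" "\<And>x. f x \<le> h x"
  shows "integrable M f"
proof (rule Bochner_Integration.integrable_bound[of _ "\<lambda>x. \<bar>g x\<bar> + \<bar>h x\<bar>"])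
  show "AE x in M. norm (f x) \<le> norm (\<bar>g x\<bar> + \<bar>h x\<bar>)"
    using assms(4,5) by (intro AE_I2) (simp add: abs_le_iff, smt (verit))
qed (use assms in auto)

lemma diff_entropy_bounds_of_ratio_bounds:
  fixes p q :: "real \<Rightarrow> real" and dmin dmax :: real
  defines "c \<equiv> 1 / dmin - 1 / dmax"
    and "E \<equiv> \<integral>x. max 0 (q x * ln (q x)) \<partial>lborel"
  assumes q: "prob_density q" and p: "prob_density p"
    and q_int: "integrable lborel (\<lambda>x. q x * ln (q x))"
    and d: "0 < dmin" "dmin \<le> dmax"
    and lower: "\<And>x. q x / dmax \<le> p x" and upper: "\<And>x. p x \<le> q x / dmin"
  shows "integrable lborel (\<lambda>x. p x * ln (p x))"
    and "diff_entropy q / dmax + ln dmin - c * E \<le> diff_entropy p"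
    and "diff_entropy p \<le> diff_entropy q / dmin + ln dmax + c * E"
proof -
  have q_nonneg: "\<And>x. 0 \<le> q x" using q by (simp add: prob_density_def)
  have p_density: "p \<in> borel_measurable borel" "integrable lborel p" "(\<integral>x. p x \<partial>lborel) = 1"
    using p by (auto simp: prob_density_def)
  define U where "U x = q x * ln (q x) / dmax - p x * ln dmin + c * max 0 (q x * ln (q x))" for x
  define L where "L x = q x * ln (q x) / dmin - p x * ln dmax - c * max 0 (q x * ln (q x))" for x
  note pointwise = mult_ln_bounds_of_ratio_bounds[OF d q_nonneg lower upper, folded c_def]
  have U_int: "integrable lborel U" and L_int: "integrable lborel L"
    unfolding U_def L_def using q_int p_density by auto
  have "(\<lambda>x. p x * ln (p x)) \<in> borel_measurable lborel"
    using p_density by measurable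
  then show int: "integrable lborel (\<lambda>x. p x * ln (p x))"
    using pointwise by (intro integrable_between[OF _ L_int U_int]) (simp_all add: L_def U_def)
  have "(\<integral>x. p x * ln (p x) \<partial>lborel) \<le> integral\<^sup>L lborel U"
    using pointwise by (intro integral_mono[OF int U_int]) (simp add: U_def)
  also have "\<dots> = - diff_entropy q / dmax - ln dmin + c * E"
    using q_int p_density unfolding U_def E_def diff_entropy_def by simp
  finally show "diff_entropy q / dmax + ln dmin - c * E \<le> diff_entropy p"
    unfolding diff_entropy_def by simp
  have "- diff_entropy q / dmin - ln dmax - c * E = integral\<^sup>L lborel L"
    using q_int p_density unfolding L_def E_def diff_entropy_def by simp
  also have "\<dots> \<le> (\<integral>x. p x * ln (p x) \<partial>lborel)"
    using pointwise by (intro integral_mono[OF L_int int]) (simp add: L_def)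
  finally show "diff_entropy p \<le> diff_entropy q / dmin + ln dmax + c * E"
    unfolding diff_entropy_def by simp
qed

theorem mainTheorem4:
  fixes q p :: "real \<Rightarrow> real" and dmin dmax :: real
    and M :: "'a measure" and X :: "'a \<Rightarrow> real"
  assumes q: "sym_unimodal_density q"
    and hq_finite: "integrable lborel (\<lambda>x. q x * ln (q x))"
    and dmin_pos: "0 < dmin" and dmin_le: "dmin \<le> dmax"
    and M: "prob_space M"
    and X: "distributed M lborel X (\<lambda>x. ennreal (p x))"
    and lower: "\<And>x. q x / dmax \<le> p x"
    and upper: "\<And>x. p x \<le> q x / dmin"
  shows "integrable lborel (\<lambda>x. p x * ln (p x))
    \<and> diff_entropy p \<ge> diff_entropy q / dmax + ln dmin
           - (1 / dmin - 1 / dmax) * pos_part (q 0 * ln (q 0))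
    \<and> diff_entropy p \<le> diff_entropy q / dmin + ln dmax
           + (1 / dmin - 1 / dmax) * pos_part (q 0 * ln (q 0))"
proof -
  have q_density: "prob_density q" using q by (simp add: sym_unimodal_density_def)
  have "0 \<le> p x" for x
    using lower[of x] q_density dmin_pos dmin_le
    by (smt (verit) divide_nonneg_pos prob_density_def)
  then have p_density: "prob_density p" by (rule prob_density_of_distributed[OF M X])
  have "(1 / dmin - 1 / dmax) * (\<integral>x. max 0 (q x * ln (q x)) \<partial>lborel)
      \<le> (1 / dmin - 1 / dmax) * pos_part (q 0 * ln (q 0))"
    using integral_pos_part_mult_ln_le[OF q hq_finite] dmin_pos dmin_le
    by (intro mult_left_mono) (simp_all add: frac_le)
  then show ?thesis
    using diff_entropy_bounds_of_ratio_bounds[OF q_density p_density hq_finite dmin_pos dmin_le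
        lower upper]
    by linarith
qed

end
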